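(* Let $D$ be a regular $(v,k,\lambda,\mu)$-PDS in a finite group $G$ with $0<\mu<k$ and $\sqrt\Delta\in\mathbb{Z}$, and let $\alpha\in\{1,2\}$. If some nonprincipal linear character of $G$ has order dividing $\pi_\alpha$, then every linear character of $G$ whose order is coprime to $\sqrt\Delta$ has order dividing $\pi_\alpha$.
   Context: A $(v,k,\lambda,\mu)$-PDS in a group $G$ of order $v$ is a $k$-subset $D$ such that every nonidentity element of $D$ is $xy^{-1}$ ($x,y\in D$) in exactly $\lambda$ ways and every nonidentity element of $G\setminus D$ in exactly $\mu$ ways; regular means $D=D^{(-1)}$ and $1\notin D$. $\Delta=(\lambda-\mu)^2+4(k-\mu)$, $\theta_{1,2}=\frac12(\lambda-\mu\pm\sqrt\Delta)$. Every prime $p$ dividing $v$ but not $\sqrt\Delta$ divides exactly one of $k-\theta_1$, $k-\theta_2$. For $i\in\{1,2\}$, $\Pi_i$ is the set of primes $p$ with $p\mid v$, $p\nmid\sqrt\Delta$ and $p\mid k-\theta_i$, and $\pi_i=\prod_{p\in\Pi_i}p^{e_p}$ where $p^{e_p}$ is the exact power of $p$ dividing $v$. $\chi(D)=\sum_{d\in D}\chi(d)$. *)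

theory Defs
  imports Complex_Main "HOL-Algebra.Group" "HOL-Computational_Algebra.Primes"
begin

definition is_PDS :: "('a,'b) monoid_scheme \<Rightarrow> 'a set \<Rightarrow> nat \<Rightarrow> nat \<Rightarrow> nat \<Rightarrow> nat \<Rightarrow> bool" where
  "is_PDS G D v k la mu \<longleftrightarrow>
     D \<subseteq> carrier G \<and> card (carrier G) = v \<and> card D = k \<and>
     (\<forall>g \<in> carrier G - {\<one>\<^bsub>G\<^esub>}.
        card {(x,y) \<in> D \<times> D. x \<otimes>\<^bsub>G\<^esub> inv\<^bsub>G\<^esub> y = g} = (if g \<in> D then la else mu))"

definition is_regular_PDS :: "('a,'b) monoid_scheme \<Rightarrow> 'a set \<Rightarrow> nat \<Rightarrow> nat \<Rightarrow> nat \<Rightarrow> nat \<Rightarrow> bool" where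
  "is_regular_PDS G D v k la mu \<longleftrightarrow>
     is_PDS G D v k la mu \<and> (\<lambda>x. inv\<^bsub>G\<^esub> x) ` D = D \<and> \<one>\<^bsub>G\<^esub> \<notin> D"

definition PDS_Delta :: "nat \<Rightarrow> nat \<Rightarrow> nat \<Rightarrow> int" where
  "PDS_Delta k la mu = (int la - int mu)^2 + 4 * (int k - int mu)"

text \<open>theta_1, theta_2, where s = sqrt Delta (an integer); the division by 2 is exact
  since s and la - mu have the same parity when s^2 = Delta.\<close>
definition PDS_theta :: "nat \<Rightarrow> nat \<Rightarrow> nat \<Rightarrow> nat \<Rightarrow> int" where
  "PDS_theta la mu s i =
     (if i = 1 then (int la - int mu + int s) div 2 else (int la - int mu - int s) div 2)"

definition PDS_Pi :: "nat \<Rightarrow> nat \<Rightarrow> nat \<Rightarrow> nat \<Rightarrow> nat \<Rightarrow> nat \<Rightarrow> nat set" where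
  "PDS_Pi v k la mu s i =
     {p. prime p \<and> p dvd v \<and> \<not> p dvd s \<and> int p dvd (int k - PDS_theta la mu s i)}"

definition PDS_pi :: "nat \<Rightarrow> nat \<Rightarrow> nat \<Rightarrow> nat \<Rightarrow> nat \<Rightarrow> nat \<Rightarrow> nat" where
  "PDS_pi v k la mu s i = (\<Prod>p \<in> PDS_Pi v k la mu s i. p ^ multiplicity p v)"

definition linear_char :: "('a,'b) monoid_scheme \<Rightarrow> ('a \<Rightarrow> complex) \<Rightarrow> bool" where
  "linear_char G \<chi> \<longleftrightarrow>
     (\<forall>x \<in> carrier G. \<chi> x \<noteq> 0) \<and>
     (\<forall>x \<in> carrier G. \<forall>y \<in> carrier G. \<chi> (x \<otimes>\<^bsub>G\<^esub> y) = \<chi> x * \<chi> y)"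

definition principal_char :: "('a,'b) monoid_scheme \<Rightarrow> ('a \<Rightarrow> complex) \<Rightarrow> bool" where
  "principal_char G \<chi> \<longleftrightarrow> (\<forall>x \<in> carrier G. \<chi> x = 1)"

definition char_order :: "('a,'b) monoid_scheme \<Rightarrow> ('a \<Rightarrow> complex) \<Rightarrow> nat" where
  "char_order G \<chi> = (LEAST n. 0 < n \<and> (\<forall>x \<in> carrier G. \<chi> x ^ n = 1))"

end

(*
  The values of linear characters lie in Z[w] for a primitive |G|-th root of unity w. For a
  nonprincipal linear character chi, regularity of D gives chi(D)^2 = (la - mu) chi(D) + (k - mu),
  so chi(D) is theta_1 or theta_2. If chi^r = psi^r for a prime r, the Frobenius congruence
  (x_1 + ... + x_n)^r == x_1^r + ... + x_n^r (mod r Z[w]) gives chi(D) == psi(D) (mod r).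
  Comparing a character of prime order p with the principal one (value k) shows that chi(D) is
  the theta_i with p | k - theta_i, which is unique when p does not divide
  sqrt Delta = theta_1 - theta_2.

  Let chi have prime order p in Pi_alpha, so chi(D) = theta_alpha, and let psi have prime order
  q not dividing sqrt Delta, q <> p. Then (chi psi)(D) == psi(D) (mod p) and
  (chi psi)(D) == chi(D) (mod q), so all three values equal theta_alpha and q | k - theta_alpha,
  i.e. q is in Pi_alpha. Applied to the prime factors of the order of an arbitrary psi this gives
  the theorem.
*)

theory Submission
  imports Defs "Jordan_Normal_Form.Char_Poly" "HOL-Algebra.Multiplicative_Group"
begin

section \<open>Algebraic integers as eigenvalues of integer matrices\<close>

definition powers_vec :: "nat \<Rightarrow> complex \<Rightarrow> complex vec" where
  "powers_vec N w = vec N (\<lambda>i. w ^ i)"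

(*
  For w^N = 1
  this is a subring of C containing w, and its elements are algebraic integers, being roots of
  monic integer characteristic polynomials; it replaces the ring of integers of Q(w), for which
  closure under + and * would be much harder to establish.
*)
definition int_eigenvalues :: "nat \<Rightarrow> complex \<Rightarrow> complex set" where
  "int_eigenvalues N w = {x. \<exists>B \<in> carrier_mat N N.
     map_mat of_int B *\<^sub>v powers_vec N w = x \<cdot>\<^sub>v powers_vec N w}"

lemma powers_vec_carrier [simp]: "powers_vec N w \<in> carrier_vec N"
  by (simp add: powers_vec_def)

lemma int_eigenvaluesI:
  "B \<in> carrier_mat N N \<Longrightarrow> map_mat of_int B *\<^sub>v powers_vec N w = x \<cdot>\<^sub>v powers_vec N w \<Longrightarrow>
    x \<in> int_eigenvalues N w"
  unfolding int_eigenvalues_def by blast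

lemma int_eigenvaluesE:
  assumes "x \<in> int_eigenvalues N w"
  obtains B where "B \<in> carrier_mat N N"
    "map_mat of_int B *\<^sub>v powers_vec N w = x \<cdot>\<^sub>v powers_vec N w"
  using assms unfolding int_eigenvalues_def by blast

lemma int_eigenvaluesI_rows:
  assumes "\<And>i. i < N \<Longrightarrow> (\<Sum>j<N. of_int (b i j) * w ^ j) = x * w ^ i"
  shows "x \<in> int_eigenvalues N w"
proof (rule int_eigenvaluesI[of "mat N N (\<lambda>(i, j). b i j)"], simp, rule eq_vecI)
  fix i assume "i < dim_vec (x \<cdot>\<^sub>v powers_vec N w)"
  then have "i < N" by (simp add: powers_vec_def)
  with assms show "(map_mat of_int (mat N N (\<lambda>(i, j). b i j)) *\<^sub>v powers_vec N w) $ i =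
      (x \<cdot>\<^sub>v powers_vec N w) $ i"
    by (simp add: powers_vec_def mult_mat_vec_def scalar_prod_def atLeast0LessThan)
qed (simp add: powers_vec_def)

lemma int_eigenvalues_of_int [simp]: "of_int c \<in> int_eigenvalues N w"
proof (rule int_eigenvaluesI_rows[where b = "\<lambda>i j. if j = i then c else 0"])
  fix i assume "i < N"
  have "(\<Sum>j<N. of_int (if j = i then c else 0) * w ^ j) = (\<Sum>j<N. if j = i then of_int c * w ^ j else 0)"
    by (rule sum.cong) auto
  with \<open>i < N\<close> show "(\<Sum>j<N. of_int (if j = i then c else 0) * w ^ j) = of_int c * w ^ i"
    by simp
qed

lemma int_eigenvalues_add:
  assumes "x \<in> int_eigenvalues N w" "y \<in> int_eigenvalues N w"
  shows "x + y \<in> int_eigenvalues N w"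
proof -
  obtain A where A: "A \<in> carrier_mat N N" "map_mat of_int A *\<^sub>v powers_vec N w = x \<cdot>\<^sub>v powers_vec N w"
    using assms(1) by (rule int_eigenvaluesE)
  obtain B where B: "B \<in> carrier_mat N N" "map_mat of_int B *\<^sub>v powers_vec N w = y \<cdot>\<^sub>v powers_vec N w"
    using assms(2) by (rule int_eigenvaluesE)
  have "map_mat of_int (A + B) = map_mat (of_int :: int \<Rightarrow> complex) A + map_mat of_int B"
    using A B by (intro eq_matI) auto
  then have "map_mat of_int (A + B) *\<^sub>v powers_vec N w =
      map_mat of_int A *\<^sub>v powers_vec N w + map_mat of_int B *\<^sub>v powers_vec N w"
    using A B by (simp only: add_mult_distrib_mat_vec[of _ N N] map_carrier_mat powers_vec_carrier)
  also have "\<dots> = (x + y) \<cdot>\<^sub>v powers_vec N w"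
    unfolding A(2) B(2) by (rule add_smult_distrib_vec[symmetric])
  finally show ?thesis using A B by (intro int_eigenvaluesI[of "A + B"]) auto
qed

lemma int_eigenvalues_mult:
  assumes "x \<in> int_eigenvalues N w" "y \<in> int_eigenvalues N w"
  shows "x * y \<in> int_eigenvalues N w"
proof -
  obtain A where A: "A \<in> carrier_mat N N" "map_mat of_int A *\<^sub>v powers_vec N w = x \<cdot>\<^sub>v powers_vec N w"
    using assms(1) by (rule int_eigenvaluesE)
  obtain B where B: "B \<in> carrier_mat N N" "map_mat of_int B *\<^sub>v powers_vec N w = y \<cdot>\<^sub>v powers_vec N w"
    using assms(2) by (rule int_eigenvaluesE)
  have A': "map_mat (of_int :: int \<Rightarrow> complex) A \<in> carrier_mat N N"
    and B': "map_mat (of_int :: int \<Rightarrow> complex) B \<in> carrier_mat N N"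
    using A B by simp_all
  have "map_mat of_int (A * B) *\<^sub>v powers_vec N w =
      map_mat of_int A *\<^sub>v (map_mat of_int B *\<^sub>v powers_vec N w)"
    by (simp add: of_int_hom.mat_hom_mult[OF A(1) B(1)] assoc_mult_mat_vec[OF A' B'])
  also have "\<dots> = y \<cdot>\<^sub>v (x \<cdot>\<^sub>v powers_vec N w)"
    unfolding B(2) mult_mat_vec[OF A' powers_vec_carrier] A(2) ..
  also have "\<dots> = (x * y) \<cdot>\<^sub>v powers_vec N w"
    by (simp add: smult_smult_assoc mult.commute)
  finally show ?thesis using A B by (intro int_eigenvaluesI[of "A * B"]) auto
qed

lemma int_eigenvalues_uminus:
  "x \<in> int_eigenvalues N w \<Longrightarrow> - x \<in> int_eigenvalues N w"
  using int_eigenvalues_mult[OF int_eigenvalues_of_int[of "-1"]] by simp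

lemma int_eigenvalues_of_nat [simp]: "of_nat n \<in> int_eigenvalues N w"
  using int_eigenvalues_of_int[of "int n"] by simp

lemma int_eigenvalues_power:
  "x \<in> int_eigenvalues N w \<Longrightarrow> x ^ n \<in> int_eigenvalues N w"
  using int_eigenvalues_of_nat[of 1] by (induction n) (auto intro: int_eigenvalues_mult)

lemma int_eigenvalues_sum:
  "(\<And>i. i \<in> A \<Longrightarrow> f i \<in> int_eigenvalues N w) \<Longrightarrow> sum f A \<in> int_eigenvalues N w"
  using int_eigenvalues_of_nat[of 0] by (induction A rule: infinite_finite_induct) (auto intro: int_eigenvalues_add)

lemma self_in_int_eigenvalues:
  assumes "0 < N" "w ^ N = 1"
  shows "w \<in> int_eigenvalues N w"
proof (rule int_eigenvaluesI_rows[where b = "\<lambda>i j. if j = Suc i mod N then 1 else 0"])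
  fix i assume "i < N"
  have "w ^ Suc i = w ^ (N * (Suc i div N) + Suc i mod N)"
    by (simp only: mult_div_mod_eq)
  also have "\<dots> = w ^ (Suc i mod N)"
    using assms(2) by (simp only: power_add power_mult power_one mult_1)
  finally have "w * w ^ i = w ^ (Suc i mod N)"
    by simp
  moreover have "(\<Sum>j<N. of_int (if j = Suc i mod N then 1 else 0) * w ^ j) =
      (\<Sum>j<N. if j = Suc i mod N then w ^ j else 0)"
    by (rule sum.cong) auto
  ultimately show "(\<Sum>j<N. of_int (if j = Suc i mod N then 1 else 0) * w ^ j) = w * w ^ i"
    using assms(1) by simp
qed

lemma root_of_unity_in_int_eigenvalues:
  assumes "0 < N" "z ^ N = 1"
  shows "z \<in> int_eigenvalues N (cis (2 * pi / N))"
proof -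
  obtain j where "z = cis (2 * pi * real j / real N)"
    using bij_betw_roots_unity[OF assms(1)] assms(2) unfolding bij_betw_def by auto
  then have "z = cis (2 * pi / N) ^ j"
    by (simp add: DeMoivre field_simps)
  moreover have "cis (2 * pi / N) ^ N = 1"
    using assms(1) by (simp add: DeMoivre)
  ultimately show ?thesis
    using int_eigenvalues_power self_in_int_eigenvalues[OF assms(1)] by metis
qed

lemma algebraic_int_int_eigenvalue:
  assumes "0 < N" "x \<in> int_eigenvalues N w"
  shows "algebraic_int x"
proof -
  obtain B where B: "B \<in> carrier_mat N N"
    "map_mat of_int B *\<^sub>v powers_vec N w = x \<cdot>\<^sub>v powers_vec N w"
    using assms(2) by (rule int_eigenvaluesE)
  let ?B = "map_mat (of_int :: int \<Rightarrow> complex) B"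
  have "powers_vec N w $ 0 = 1"
    using assms(1) by (simp add: powers_vec_def)
  then have "powers_vec N w \<noteq> 0\<^sub>v N"
    using assms(1) by (metis index_zero_vec(1) zero_neq_one)
  with B have "eigenvalue ?B x"
    unfolding eigenvalue_def eigenvector_def by (auto intro!: exI[of _ "powers_vec N w"])
  then have "poly (char_poly ?B) x = 0"
    using eigenvalue_root_char_poly[of ?B N] B(1) by simp
  then have "poly (map_poly of_int (char_poly B)) x = 0"
    by (simp add: of_int_hom.char_poly_hom[OF B(1)])
  moreover have "lead_coeff (char_poly B) = 1"
    using degree_monic_char_poly[OF B(1)] by simp
  ultimately show ?thesis
    unfolding algebraic_int_altdef_ipoly by blast
qed

lemma int_dvd_if_int_eigenvalue_multiple:
  assumes "0 < N" "0 < r" "z \<in> int_eigenvalues N w" "of_int n = of_nat r * z"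
  shows "int r dvd n"
proof -
  have "z = of_int n / of_nat r"
    using assms(2,4) by (simp add: field_simps)
  then have "z \<in> \<rat>"
    by simp
  then have "z \<in> \<int>"
    using rational_algebraic_int_is_int algebraic_int_int_eigenvalue[OF assms(1,3)] by blast
  then obtain m where "z = of_int m"
    by (auto elim: Ints_cases)
  with assms(4) have "of_int n = (of_int (int r * m) :: complex)"
    by simp
  then have "n = int r * m"
    by (simp only: of_int_eq_iff)
  then show ?thesis
    by simp
qed

section \<open>The Frobenius congruence\<close>

lemma int_eigenvalues_power_add_prime:
  assumes "prime r" "x \<in> int_eigenvalues N w" "y \<in> int_eigenvalues N w"
  shows "\<exists>z \<in> int_eigenvalues N w. (x + y) ^ r = x ^ r + y ^ r + of_nat r * z"
proof
  have "0 < r" using assms(1) prime_gt_0_nat by blast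
  define z where "z = (\<Sum>i\<in>{1..<r}. of_nat ((r choose i) div r) * x ^ i * y ^ (r - i))"
  show "z \<in> int_eigenvalues N w"
    unfolding z_def using assms(2,3)
    by (intro int_eigenvalues_sum int_eigenvalues_mult int_eigenvalues_power int_eigenvalues_of_nat)
  have middle: "(\<Sum>i\<in>{1..<r}. of_nat (r choose i) * x ^ i * y ^ (r - i)) = of_nat r * z"
    unfolding z_def sum_distrib_left
  proof (rule sum.cong[OF refl])
    fix i assume "i \<in> {1..<r}"
    then have "r dvd r choose i"
      using assms(1) by (intro dvd_choose_prime) auto
    then show "of_nat (r choose i) * x ^ i * y ^ (r - i) =
        of_nat r * (of_nat ((r choose i) div r) * x ^ i * y ^ (r - i))"
      by (metis dvd_mult_div_cancel mult.assoc of_nat_mult)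
  qed
  have "{..r} = {0, r} \<union> {1..<r}" by auto
  then have "(x + y) ^ r = (\<Sum>i\<in>{0, r} \<union> {1..<r}. of_nat (r choose i) * x ^ i * y ^ (r - i))"
    by (simp only: binomial_ring)
  also have "\<dots> = (\<Sum>i\<in>{0, r}. of_nat (r choose i) * x ^ i * y ^ (r - i)) +
      (\<Sum>i\<in>{1..<r}. of_nat (r choose i) * x ^ i * y ^ (r - i))"
    by (rule sum.union_disjoint) auto
  also have "\<dots> = x ^ r + y ^ r + of_nat r * z"
    using \<open>0 < r\<close> unfolding middle by simp
  finally show "(x + y) ^ r = x ^ r + y ^ r + of_nat r * z" .
qed

lemma int_eigenvalues_power_sum_prime:
  assumes "prime r" "finite A" "\<And>i. i \<in> A \<Longrightarrow> f i \<in> int_eigenvalues N w"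
  shows "\<exists>z \<in> int_eigenvalues N w. sum f A ^ r = (\<Sum>i\<in>A. f i ^ r) + of_nat r * z"
  using assms(2,3)
proof (induction A rule: finite_induct)
  case empty
  have "sum f {} ^ r = (\<Sum>i\<in>{}. f i ^ r) + of_nat r * 0"
    using prime_gt_0_nat[OF assms(1)] by (simp add: power_0_left)
  then show ?case
    using int_eigenvalues_of_nat[of 0] by force
next
  case (insert a A)
  then obtain z where z: "z \<in> int_eigenvalues N w" "sum f A ^ r = (\<Sum>i\<in>A. f i ^ r) + of_nat r * z"
    by auto
  have "f a \<in> int_eigenvalues N w" "sum f A \<in> int_eigenvalues N w"
    using insert.prems by (simp_all add: int_eigenvalues_sum)
  then obtain z' where z': "z' \<in> int_eigenvalues N w"
    "(f a + sum f A) ^ r = f a ^ r + sum f A ^ r + of_nat r * z'"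
    using int_eigenvalues_power_add_prime[OF assms(1)] by blast
  have "sum f (insert a A) ^ r = (\<Sum>i\<in>insert a A. f i ^ r) + of_nat r * (z + z')"
    using insert.hyps z z' by (simp add: algebra_simps)
  moreover have "z + z' \<in> int_eigenvalues N w"
    using z(1) z'(1) by (rule int_eigenvalues_add)
  ultimately show ?case
    by blast
qed

lemma int_dvd_minus_one_power_prime_plus_1:
  assumes "prime r"
  shows "int r dvd (-1) ^ r + 1"
  using assms prime_ge_2_nat[OF assms] prime_odd_nat[of r] by (cases "r = 2") auto

(* Modulo r: (sum f - sum g)^r == (sum f)^r + (- sum g)^r == sum f^r + (-1)^r sum g^r
   == (1 + (-1)^r) sum g^r == 0. *)
lemma int_eigenvalues_sum_diff_power_prime:
  assumes "prime r" "finite A"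
    and f: "\<And>i. i \<in> A \<Longrightarrow> f i \<in> int_eigenvalues N w"
    and g: "\<And>i. i \<in> A \<Longrightarrow> g i \<in> int_eigenvalues N w"
    and fg: "\<And>i. i \<in> A \<Longrightarrow> f i ^ r = g i ^ r"
  shows "\<exists>z \<in> int_eigenvalues N w. (sum f A - sum g A) ^ r = of_nat r * z"
proof -
  let ?S = "\<Sum>i\<in>A. g i ^ r"
  obtain z1 where z1: "z1 \<in> int_eigenvalues N w" "sum f A ^ r = (\<Sum>i\<in>A. f i ^ r) + of_nat r * z1"
    using int_eigenvalues_power_sum_prime[where f = f, OF assms(1,2) f] by blast
  obtain z2 where z2: "z2 \<in> int_eigenvalues N w" "sum g A ^ r = ?S + of_nat r * z2"
    using int_eigenvalues_power_sum_prime[where f = g, OF assms(1,2) g] by blast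
  have "sum f A \<in> int_eigenvalues N w" "- sum g A \<in> int_eigenvalues N w"
    using f g by (simp_all add: int_eigenvalues_sum int_eigenvalues_uminus)
  then obtain z3 where z3: "z3 \<in> int_eigenvalues N w"
    "(sum f A + - sum g A) ^ r = sum f A ^ r + (- sum g A) ^ r + of_nat r * z3"
    using int_eigenvalues_power_add_prime[OF assms(1)] by blast
  obtain c where c: "(-1) ^ r + 1 = int r * c"
    using int_dvd_minus_one_power_prime_plus_1[OF assms(1)] by blast
  define z where "z = of_int c * ?S + z1 + of_int ((-1) ^ r) * z2 + z3"
  have "?S \<in> int_eigenvalues N w"
    using g by (simp add: int_eigenvalues_sum int_eigenvalues_power)
  then have "z \<in> int_eigenvalues N w"
    unfolding z_def using z1(1) z2(1) z3(1) int_eigenvalues_of_int[of "(-1) ^ r" N w]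
    by (simp add: int_eigenvalues_add int_eigenvalues_mult)
  have fS: "(\<Sum>i\<in>A. f i ^ r) = ?S"
    using fg by (rule sum.cong[OF refl])
  have c': "(-1) ^ r + 1 = (of_nat r * of_int c :: complex)"
    using arg_cong[OF c, of "of_int :: int \<Rightarrow> complex"] by simp
  have "(sum f A - sum g A) ^ r = (sum f A + - sum g A) ^ r"
    by simp
  also have "\<dots> = ?S + of_nat r * z1 + (-1) ^ r * (?S + of_nat r * z2) + of_nat r * z3"
    by (simp only: z3(2) z1(2) fS power_minus[of "sum g A"] z2(2))
  also have "\<dots> = ((-1) ^ r + 1) * ?S + of_nat r * (z1 + (-1) ^ r * z2 + z3)"
    by (simp add: algebra_simps)
  also have "\<dots> = of_nat r * z"
    unfolding c' z_def by (simp add: algebra_simps)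
  finally show ?thesis
    using \<open>z \<in> int_eigenvalues N w\<close> by blast
qed

lemma int_eigenvalues_sums_congruent:
  assumes "0 < N" "prime r" "finite A"
    and "\<And>i. i \<in> A \<Longrightarrow> f i \<in> int_eigenvalues N w" "\<And>i. i \<in> A \<Longrightarrow> g i \<in> int_eigenvalues N w"
    and "\<And>i. i \<in> A \<Longrightarrow> f i ^ r = g i ^ r"
    and "sum f A = of_int a" "sum g A = of_int b"
  shows "int r dvd a - b"
proof -
  obtain z where "z \<in> int_eigenvalues N w" "(sum f A - sum g A) ^ r = of_nat r * z"
    using int_eigenvalues_sum_diff_power_prime[where f = f and g = g, OF assms(2-6)] by blast
  then have "int r dvd (a - b) ^ r"
    using assms(1,7,8) prime_gt_0_nat[OF assms(2)] by (auto intro: int_dvd_if_int_eigenvalue_multiple)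
  then show ?thesis
    by (rule prime_dvd_power[rotated]) (use assms(2) in simp)
qed

section \<open>Linear characters\<close>

context group
begin

lemma linear_char_one:
  assumes "linear_char G \<chi>"
  shows "\<chi> \<one> = 1"
proof -
  have "\<chi> (\<one> \<otimes> \<one>) = \<chi> \<one> * \<chi> \<one>" "\<chi> \<one> \<noteq> 0"
    using assms unfolding linear_char_def by blast+
  then show ?thesis
    by simp
qed

lemma linear_char_mult:
  "linear_char G \<chi> \<Longrightarrow> x \<in> carrier G \<Longrightarrow> y \<in> carrier G \<Longrightarrow> \<chi> (x \<otimes> y) = \<chi> x * \<chi> y"
  unfolding linear_char_def by simp

lemma linear_char_nat_pow:
  assumes "linear_char G \<chi>" "x \<in> carrier G"
  shows "\<chi> (x [^] (n :: nat)) = \<chi> x ^ n"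
  using assms by (induction n) (simp_all add: linear_char_one linear_char_mult mult.commute)

lemma linear_char_power_order_eq_1:
  assumes "linear_char G \<chi>" "x \<in> carrier G"
  shows "\<chi> x ^ order G = 1"
  using linear_char_nat_pow[OF assms, of "order G"] pow_order_eq_1[OF assms(2)] linear_char_one[OF assms(1)]
  by simp

lemma linear_char_times:
  "linear_char G \<chi> \<Longrightarrow> linear_char G \<psi> \<Longrightarrow> linear_char G (\<lambda>x. \<chi> x * \<psi> x)"
  unfolding linear_char_def by (simp add: algebra_simps)

lemma linear_char_power:
  "linear_char G \<chi> \<Longrightarrow> linear_char G (\<lambda>x. \<chi> x ^ n)"
  unfolding linear_char_def by (simp add: power_mult_distrib)

lemma linear_char_const_1: "linear_char G (\<lambda>_. 1)"
  unfolding linear_char_def by simp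

lemma char_order_LeastI:
  assumes "finite (carrier G)" "linear_char G \<chi>"
  shows "0 < char_order G \<chi> \<and> (\<forall>x \<in> carrier G. \<chi> x ^ char_order G \<chi> = 1)"
proof -
  have "0 < order G \<and> (\<forall>x \<in> carrier G. \<chi> x ^ order G = 1)"
    using assms(1) linear_char_power_order_eq_1[OF assms(2)] by (simp add: order_gt_0_iff_finite)
  then show ?thesis
    unfolding char_order_def by (rule LeastI)
qed

lemma char_order_dvd_iff:
  assumes "finite (carrier G)" "linear_char G \<chi>"
  shows "char_order G \<chi> dvd m \<longleftrightarrow> (\<forall>x \<in> carrier G. \<chi> x ^ m = 1)"
proof
  let ?o = "char_order G \<chi>"
  have o: "0 < ?o" "\<And>x. x \<in> carrier G \<Longrightarrow> \<chi> x ^ ?o = 1"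
    using char_order_LeastI[OF assms] by auto
  show "\<forall>x \<in> carrier G. \<chi> x ^ m = 1" if "?o dvd m"
    using that o(2) by (auto elim!: dvdE simp: power_mult)
  assume m: "\<forall>x \<in> carrier G. \<chi> x ^ m = 1"
  have rem: "\<forall>x \<in> carrier G. \<chi> x ^ (m mod ?o) = 1"
  proof
    fix x assume "x \<in> carrier G"
    moreover have "\<chi> x ^ m = (\<chi> x ^ ?o) ^ (m div ?o) * \<chi> x ^ (m mod ?o)"
      by (simp flip: power_mult power_add)
    ultimately show "\<chi> x ^ (m mod ?o) = 1"
      using m o(2) by simp
  qed
  show "?o dvd m"
  proof (rule ccontr)
    assume "\<not> ?o dvd m"
    then have "0 < m mod ?o"
      by (simp add: mod_greater_zero_iff_not_dvd)
    then have "?o \<le> m mod ?o"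
      using rem Least_le[of "\<lambda>n. 0 < n \<and> (\<forall>x\<in>carrier G. \<chi> x ^ n = 1)" "m mod ?o"]
      unfolding char_order_def[symmetric] by simp
    moreover have "m mod ?o < ?o"
      using o(1) by simp
    ultimately show False
      by simp
  qed
qed

lemma principal_char_iff_char_order_eq_1:
  assumes "finite (carrier G)" "linear_char G \<chi>"
  shows "principal_char G \<chi> \<longleftrightarrow> char_order G \<chi> = 1"
  using char_order_dvd_iff[OF assms, of 1] unfolding principal_char_def by simp

lemma char_order_dvd_order:
  "finite (carrier G) \<Longrightarrow> linear_char G \<chi> \<Longrightarrow> char_order G \<chi> dvd order G"
  by (simp add: char_order_dvd_iff linear_char_power_order_eq_1)

lemma linear_char_power_div_prime:
  assumes "finite (carrier G)" "linear_char G \<chi>" "prime p" "p dvd char_order G \<chi>"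
  shows "\<not> principal_char G (\<lambda>x. \<chi> x ^ (char_order G \<chi> div p))"
    and "x \<in> carrier G \<Longrightarrow> (\<chi> x ^ (char_order G \<chi> div p)) ^ p = 1"
proof -
  let ?o = "char_order G \<chi>"
  have o: "?o div p * p = ?o"
    using assms(4) by simp
  show "(\<chi> x ^ (?o div p)) ^ p = 1" if "x \<in> carrier G"
    using char_order_dvd_iff[OF assms(1,2), of ?o] that o by (simp flip: power_mult)
  have "0 < ?o"
    using char_order_LeastI[OF assms(1,2)] by simp
  moreover have "p \<le> ?o"
    using dvd_imp_le[OF assms(4) \<open>0 < ?o\<close>] .
  ultimately have "0 < ?o div p" "?o div p < ?o"
    using prime_gt_1_nat[OF assms(3)] by (simp_all add: div_greater_zero_iff)
  then have "\<not> ?o dvd ?o div p"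
    by (auto dest: dvd_imp_le)
  then show "\<not> principal_char G (\<lambda>x. \<chi> x ^ (?o div p))"
    using char_order_dvd_iff[OF assms(1,2)] unfolding principal_char_def by (simp add: power_mult)
qed

lemma linear_char_sum_eq_0:
  assumes "finite (carrier G)" "linear_char G \<chi>" "\<not> principal_char G \<chi>"
  shows "(\<Sum>x\<in>carrier G. \<chi> x) = 0"
proof -
  obtain g where g: "g \<in> carrier G" "\<chi> g \<noteq> 1"
    using assms(3) unfolding principal_char_def by auto
  have "(\<Sum>x\<in>carrier G. \<chi> x) = (\<Sum>x\<in>carrier G. \<chi> (g \<otimes> x))"
    by (rule sum.reindex_bij_witness[where j = "\<lambda>x. inv g \<otimes> x" and i = "\<lambda>x. g \<otimes> x"])
       (auto simp: g m_assoc[symmetric])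
  also have "\<dots> = \<chi> g * (\<Sum>x\<in>carrier G. \<chi> x)"
    by (simp add: sum_distrib_left linear_char_mult[OF assms(2)] g)
  finally have "(\<chi> g - 1) * (\<Sum>x\<in>carrier G. \<chi> x) = 0"
    by (simp add: algebra_simps)
  with g show ?thesis
    by simp
qed

lemma linear_char_in_int_eigenvalues:
  assumes "finite (carrier G)" "linear_char G \<chi>" "x \<in> carrier G"
  shows "\<chi> x \<in> int_eigenvalues (order G) (cis (2 * pi / order G))"
  by (rule root_of_unity_in_int_eigenvalues)
     (simp_all add: assms order_gt_0_iff_finite linear_char_power_order_eq_1)

lemma linear_char_sums_congruent:
  assumes "finite (carrier G)" "D \<subseteq> carrier G" "linear_char G \<chi>" "linear_char G \<psi>"
    and "prime r" "\<And>x. x \<in> D \<Longrightarrow> \<chi> x ^ r = \<psi> x ^ r"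
    and "(\<Sum>x\<in>D. \<chi> x) = of_int a" "(\<Sum>x\<in>D. \<psi> x) = of_int b"
  shows "int r dvd a - b"
proof (rule int_eigenvalues_sums_congruent[where N = "order G" and w = "cis (2 * pi / order G)"
      and A = D and f = \<chi> and g = \<psi>])
  show "0 < order G" "finite D"
    using assms(1,2) finite_subset by (auto simp: order_gt_0_iff_finite)
  show "\<chi> x \<in> int_eigenvalues (order G) (cis (2 * pi / order G))"
    and "\<psi> x \<in> int_eigenvalues (order G) (cis (2 * pi / order G))" if "x \<in> D" for x
    using that assms(2) by (auto intro!: linear_char_in_int_eigenvalues assms(1,3,4))
qed (use assms in simp_all)

end

section \<open>Character sums over a regular partial difference set\<close>

lemma PDS_theta_cases: "PDS_theta la mu s i \<in> {PDS_theta la mu s 1, PDS_theta la mu s 2}"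
  by (simp add: PDS_theta_def)

lemma PDS_theta_diff_sum_prod:
  assumes "int s ^ 2 = PDS_Delta k la mu"
  shows "PDS_theta la mu s 1 - PDS_theta la mu s 2 = int s"
    and "PDS_theta la mu s 1 + PDS_theta la mu s 2 = int la - int mu"
    and "PDS_theta la mu s 1 * PDS_theta la mu s 2 = int mu - int k"
proof -
  define L where "L = int la - int mu"
  have sL: "int s ^ 2 = L ^ 2 + 4 * (int k - int mu)"
    using assms unfolding PDS_Delta_def L_def by simp
  then have "even (int s ^ 2) = even (L ^ 2)"
    by simp
  then have "even (L + int s)" "even (L - int s)"
    by auto
  then have t1: "2 * PDS_theta la mu s 1 = L + int s" and t2: "2 * PDS_theta la mu s 2 = L - int s"
    unfolding PDS_theta_def L_def[symmetric] by simp_all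
  show "PDS_theta la mu s 1 - PDS_theta la mu s 2 = int s"
    and "PDS_theta la mu s 1 + PDS_theta la mu s 2 = int la - int mu"
    using t1 t2 L_def by linarith+
  have "4 * (PDS_theta la mu s 1 * PDS_theta la mu s 2) = (2 * PDS_theta la mu s 1) * (2 * PDS_theta la mu s 2)"
    by simp
  also have "\<dots> = (L + int s) * (L - int s)"
    unfolding t1 t2 ..
  also have "\<dots> = 4 * (int mu - int k)"
    using sL by (simp add: algebra_simps power2_eq_square)
  finally show "PDS_theta la mu s 1 * PDS_theta la mu s 2 = int mu - int k"
    by simp
qed

lemma PDS_theta_roots:
  assumes "int s ^ 2 = PDS_Delta k la mu"
    and "(c :: complex) ^ 2 = (of_nat la - of_nat mu) * c + (of_nat k - of_nat mu)"
  shows "c = of_int (PDS_theta la mu s 1) \<or> c = of_int (PDS_theta la mu s 2)"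
proof -
  let ?a = "of_int (PDS_theta la mu s 1) :: complex" and ?b = "of_int (PDS_theta la mu s 2) :: complex"
  have sum_prod: "?a + ?b = of_nat la - of_nat mu" "?a * ?b = of_nat mu - of_nat k"
    using arg_cong[OF PDS_theta_diff_sum_prod(2)[OF assms(1)], of "of_int :: int \<Rightarrow> complex"]
      arg_cong[OF PDS_theta_diff_sum_prod(3)[OF assms(1)], of "of_int :: int \<Rightarrow> complex"]
    by simp_all
  have "(c - ?a) * (c - ?b) = c ^ 2 - (?a + ?b) * c + ?a * ?b"
    by (simp add: algebra_simps power2_eq_square)
  also have "\<dots> = 0"
    unfolding sum_prod assms(2) by simp
  finally show ?thesis
    by simp
qed

lemma PDS_theta_eq_if_congruent:
  assumes "int s ^ 2 = PDS_Delta k la mu" "\<not> r dvd s"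
    and "x \<in> {PDS_theta la mu s 1, PDS_theta la mu s 2}" "y \<in> {PDS_theta la mu s 1, PDS_theta la mu s 2}"
    and "int r dvd x - y"
  shows "x = y"
proof (rule ccontr)
  assume "x \<noteq> y"
  then have "x - y = int s \<or> x - y = - int s"
    using assms(3,4) PDS_theta_diff_sum_prod(1)[OF assms(1)] by auto
  then have "int r dvd int s"
    using assms(5) by auto
  with assms(2) show False
    by simp
qed

lemma finite_PDS_Pi: "0 < v \<Longrightarrow> finite (PDS_Pi v k la mu s i)"
  by (rule finite_subset[of _ "{..v}"]) (auto simp: PDS_Pi_def intro: dvd_imp_le)

lemma prime_in_set_if_dvd_prod_powers:
  fixes p :: nat
  assumes "finite P" "\<And>q. q \<in> P \<Longrightarrow> prime q" "prime p" "p dvd (\<Prod>q\<in>P. q ^ e q)"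
  shows "p \<in> P"
proof -
  obtain q where q: "q \<in> P" "p dvd q ^ e q"
    using assms(4) prime_dvd_prod_iff[OF assms(1,3)] by auto
  have "p dvd q"
    using assms(3) q(2) by (rule prime_dvd_power)
  then have "p = q"
    using assms(2)[OF q(1)] assms(3) by (simp add: primes_dvd_imp_eq)
  with q(1) show ?thesis
    by simp
qed

lemma dvd_prod_multiplicity_if_prime_factors_subset:
  fixes m n :: nat
  assumes "m dvd n" "n \<noteq> 0" "finite P" "prime_factors m \<subseteq> P"
  shows "m dvd (\<Prod>q\<in>P. q ^ multiplicity q n)"
proof -
  have "m \<noteq> 0"
    using assms(1,2) by auto
  then have "m = (\<Prod>q\<in>prime_factors m. q ^ multiplicity q m)"
    using prod_prime_factors[of m] by simp
  also have "\<dots> dvd (\<Prod>q\<in>prime_factors m. q ^ multiplicity q n)"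
  proof (rule prod_dvd_prod)
    fix q
    have "multiplicity q m \<le> multiplicity q n"
      by (rule dvd_imp_multiplicity_le[OF assms(1,2)])
    then show "q ^ multiplicity q m dvd q ^ multiplicity q n"
      by (rule le_imp_power_dvd)
  qed
  also have "\<dots> dvd (\<Prod>q\<in>P. q ^ multiplicity q n)"
    by (rule prod_dvd_prod_subset[OF assms(3,4)])
  finally show ?thesis .
qed

lemma power_eq_1_if_coprime_exponents:
  fixes z :: "'a :: monoid_mult"
  assumes "z ^ p = 1" "z ^ q = 1" "coprime p q" "p \<noteq> 0"
  shows "z = 1"
proof -
  obtain x y where "p * x = q * y + gcd p q"
    using bezout_nat[OF assms(4)] by blast
  with assms(3) have xy: "p * x = q * y + 1"
    by simp
  have "1 = z ^ (p * x)"
    using assms(1) by (simp add: power_mult)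
  also have "\<dots> = z"
    unfolding xy using assms(2) by (simp add: power_add power_mult)
  finally show ?thesis ..
qed

context group
begin

lemma PDS_difference_count:
  assumes "is_regular_PDS G D v k la mu" "t \<in> carrier G"
  shows "card {(x, y) \<in> D \<times> D. x \<otimes> inv y = t} = (if t = \<one> then k else if t \<in> D then la else mu)"
proof (cases "t = \<one>")
  case True
  have D: "D \<subseteq> carrier G" "card D = k"
    using assms(1) unfolding is_regular_PDS_def is_PDS_def by auto
  have "x \<otimes> inv y = \<one> \<longleftrightarrow> x = y" if "x \<in> D" "y \<in> D" for x y
    using that D(1) inv_solve_right'[of \<one> x y] by auto
  then have "{(x, y) \<in> D \<times> D. x \<otimes> inv y = \<one>} = (\<lambda>x. (x, x)) ` D"
    by auto
  moreover have "card ((\<lambda>x. (x, x)) ` D) = card D"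
    by (rule card_image) (auto simp: inj_on_def)
  ultimately show ?thesis
    using True D by simp
next
  case False
  then show ?thesis
    using assms unfolding is_regular_PDS_def is_PDS_def by auto
qed

lemma linear_char_sum_times_sum_inv:
  assumes "finite (carrier G)" "D \<subseteq> carrier G" "linear_char G \<chi>"
  shows "(\<Sum>x\<in>D. \<chi> x) * (\<Sum>y\<in>D. \<chi> (inv y)) =
    (\<Sum>t\<in>carrier G. of_nat (card {(x, y) \<in> D \<times> D. x \<otimes> inv y = t}) * \<chi> t)"
proof -
  have "finite D"
    using assms(1,2) finite_subset by blast
  have Dcar: "x \<in> carrier G" if "x \<in> D" for x
    using that assms(2) by blast
  let ?f = "\<lambda>p. fst p \<otimes> inv (snd p)"
  have fibre: "{p \<in> D \<times> D. ?f p = t} = {(x, y) \<in> D \<times> D. x \<otimes> inv y = t}" for t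
    by auto
  have "(\<Sum>x\<in>D. \<chi> x) * (\<Sum>y\<in>D. \<chi> (inv y)) = (\<Sum>x\<in>D. \<Sum>y\<in>D. \<chi> x * \<chi> (inv y))"
    by (rule sum_product)
  also have "\<dots> = (\<Sum>p\<in>D \<times> D. \<chi> (?f p))"
    by (auto simp: sum.cartesian_product linear_char_mult[OF assms(3)] Dcar intro!: sum.cong)
  also have "\<dots> = (\<Sum>t\<in>carrier G. \<Sum>p\<in>{p \<in> D \<times> D. ?f p = t}. \<chi> (?f p))"
    using \<open>finite D\<close> assms(1) by (intro sum.group[symmetric]) (auto simp: Dcar)
  also have "\<dots> = (\<Sum>t\<in>carrier G. \<Sum>p\<in>{p \<in> D \<times> D. ?f p = t}. \<chi> t)"
    by (intro sum.cong refl) auto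
  also have "\<dots> = (\<Sum>t\<in>carrier G. of_nat (card {(x, y) \<in> D \<times> D. x \<otimes> inv y = t}) * \<chi> t)"
    by (simp only: fibre sum_constant)
  finally show ?thesis .
qed

lemma PDS_char_sum_quadratic:
  assumes "finite (carrier G)" "is_regular_PDS G D v k la mu"
    and "linear_char G \<chi>" "\<not> principal_char G \<chi>"
  shows "(\<Sum>d\<in>D. \<chi> d) ^ 2 = (of_nat la - of_nat mu) * (\<Sum>d\<in>D. \<chi> d) + (of_nat k - of_nat mu)"
proof -
  have D: "D \<subseteq> carrier G" "(\<lambda>x. inv x) ` D = D" "\<one> \<notin> D"
    using assms(2) unfolding is_regular_PDS_def is_PDS_def by auto
  let ?c = "\<Sum>d\<in>D. \<chi> d"
  have "inj_on (\<lambda>x. inv x) D"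
    using D(1) inv_inj by (rule inj_on_subset[rotated])
  then have "(\<Sum>y\<in>D. \<chi> (inv y)) = ?c"
    using sum.reindex[of "\<lambda>x. inv x" D \<chi>] D(2) by (simp add: comp_def)
  then have "?c ^ 2 = ?c * (\<Sum>y\<in>D. \<chi> (inv y))"
    by (simp add: power2_eq_square)
  also have "\<dots> = (\<Sum>t\<in>carrier G. of_nat (card {(x, y) \<in> D \<times> D. x \<otimes> inv y = t}) * \<chi> t)"
    by (rule linear_char_sum_times_sum_inv[OF assms(1) D(1) assms(3)])
  also have "\<dots> = (\<Sum>t\<in>carrier G. (of_nat k - of_nat mu) * (if t = \<one> then \<chi> t else 0) +
      of_nat mu * \<chi> t + (of_nat la - of_nat mu) * (if t \<in> D then \<chi> t else 0))"
  proof (intro sum.cong refl)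
    fix t assume "t \<in> carrier G"
    then show "of_nat (card {(x, y) \<in> D \<times> D. x \<otimes> inv y = t}) * \<chi> t =
        (of_nat k - of_nat mu) * (if t = \<one> then \<chi> t else 0) +
        of_nat mu * \<chi> t + (of_nat la - of_nat mu) * (if t \<in> D then \<chi> t else 0)"
      using PDS_difference_count[OF assms(2)] D(3) by (auto simp: algebra_simps)
  qed
  also have "\<dots> = (of_nat k - of_nat mu) + (of_nat la - of_nat mu) * ?c"
    using assms(1) sum.inter_restrict[OF assms(1), of \<chi> D] Int_absorb1[OF D(1)]
    by (simp add: sum.distrib linear_char_sum_eq_0[OF assms(1,3,4)] linear_char_one[OF assms(3)]
        flip: sum_distrib_left)
  finally show ?thesis
    by simp
qed

lemma PDS_char_sum_theta:
  assumes "finite (carrier G)" "is_regular_PDS G D v k la mu" "int s ^ 2 = PDS_Delta k la mu"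
    and "linear_char G \<chi>" "\<not> principal_char G \<chi>"
  obtains \<theta> where "\<theta> \<in> {PDS_theta la mu s 1, PDS_theta la mu s 2}" "(\<Sum>d\<in>D. \<chi> d) = of_int \<theta>"
  using PDS_theta_roots[OF assms(3) PDS_char_sum_quadratic[OF assms(1,2,4,5)]] by blast

(* compare with the principal character, whose value on D is k *)
lemma PDS_char_sum_prime_exponent:
  assumes "finite (carrier G)" "is_regular_PDS G D v k la mu" "int s ^ 2 = PDS_Delta k la mu"
    and "linear_char G \<chi>" "\<not> principal_char G \<chi>"
    and "prime p" "\<And>x. x \<in> carrier G \<Longrightarrow> \<chi> x ^ p = 1"
  obtains \<theta> where "\<theta> \<in> {PDS_theta la mu s 1, PDS_theta la mu s 2}" "(\<Sum>d\<in>D. \<chi> d) = of_int \<theta>"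
    "int p dvd int k - \<theta>"
proof -
  have D: "D \<subseteq> carrier G" "card D = k"
    using assms(2) unfolding is_regular_PDS_def is_PDS_def by auto
  obtain \<theta> where \<theta>: "\<theta> \<in> {PDS_theta la mu s 1, PDS_theta la mu s 2}" "(\<Sum>d\<in>D. \<chi> d) = of_int \<theta>"
    using PDS_char_sum_theta[OF assms(1-5)] .
  have "int p dvd int k - \<theta>"
    by (rule linear_char_sums_congruent[OF assms(1) D(1) linear_char_const_1 assms(4,6)])
       (use D assms(7) \<theta>(2) in auto)
  with \<theta> that show thesis
    by blast
qed

lemma PDS_char_sums_eq_if_prime_exponents:
  assumes fin: "finite (carrier G)" and reg: "is_regular_PDS G D v k la mu"
    and s: "int s ^ 2 = PDS_Delta k la mu"
    and \<chi>: "linear_char G \<chi>" "\<And>x. x \<in> carrier G \<Longrightarrow> \<chi> x ^ p = 1"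
    and \<psi>: "linear_char G \<psi>" "\<not> principal_char G \<psi>" "\<And>x. x \<in> carrier G \<Longrightarrow> \<psi> x ^ q = 1"
    and pq: "prime p" "prime q" "p \<noteq> q" "\<not> p dvd s" "\<not> q dvd s"
    and a: "(\<Sum>d\<in>D. \<chi> d) = of_int a" "a \<in> {PDS_theta la mu s 1, PDS_theta la mu s 2}"
    and b: "(\<Sum>d\<in>D. \<psi> d) = of_int b" "b \<in> {PDS_theta la mu s 1, PDS_theta la mu s 2}"
  shows "a = b"
proof -
  have D: "D \<subseteq> carrier G"
    using reg unfolding is_regular_PDS_def is_PDS_def by auto
  define \<phi> where "\<phi> x = \<chi> x * \<psi> x" for x
  have \<phi>: "linear_char G \<phi>"
    unfolding \<phi>_def using \<chi>(1) \<psi>(1) by (rule linear_char_times)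
  have "principal_char G \<psi>" if "principal_char G \<phi>"
    unfolding principal_char_def
  proof
    fix x assume x: "x \<in> carrier G"
    have "\<psi> x ^ p = \<phi> x ^ p"
      using \<chi>(2)[OF x] by (simp add: \<phi>_def power_mult_distrib)
    also have "\<dots> = 1"
      using that x unfolding principal_char_def by simp
    finally show "\<psi> x = 1"
      by (rule power_eq_1_if_coprime_exponents[OF _ \<psi>(3)[OF x] primes_coprime[OF pq(1-3)]])
         (use pq(1) in auto)
  qed
  with \<psi>(2) obtain c where c: "c \<in> {PDS_theta la mu s 1, PDS_theta la mu s 2}" "(\<Sum>d\<in>D. \<phi> d) = of_int c"
    using PDS_char_sum_theta[OF fin reg s \<phi>] by blast
  have "int p dvd c - b"
    by (rule linear_char_sums_congruent[OF fin D \<phi> \<psi>(1) pq(1) _ c(2) b(1)])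
       (use \<chi>(2) D in \<open>auto simp: \<phi>_def power_mult_distrib\<close>)
  then have "c = b"
    using PDS_theta_eq_if_congruent[OF s pq(4) c(1) b(2)] by blast
  have "int q dvd c - a"
    by (rule linear_char_sums_congruent[OF fin D \<phi> \<chi>(1) pq(2) _ c(2) a(1)])
       (use \<psi>(3) D in \<open>auto simp: \<phi>_def power_mult_distrib\<close>)
  then have "c = a"
    using PDS_theta_eq_if_congruent[OF s pq(5) c(1) a(2)] by blast
  with \<open>c = b\<close> show ?thesis
    by simp
qed

lemma prime_exponent_char_in_PDS_Pi:
  assumes fin: "finite (carrier G)" and reg: "is_regular_PDS G D v k la mu"
    and s: "int s ^ 2 = PDS_Delta k la mu"
    and \<chi>: "linear_char G \<chi>" "\<not> principal_char G \<chi>" "\<And>x. x \<in> carrier G \<Longrightarrow> \<chi> x ^ p = 1"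
    and p: "p \<in> PDS_Pi v k la mu s \<alpha>"
    and \<psi>: "linear_char G \<psi>" "\<not> principal_char G \<psi>" "\<And>x. x \<in> carrier G \<Longrightarrow> \<psi> x ^ q = 1"
    and q: "prime q" "q dvd v" "\<not> q dvd s"
  shows "q \<in> PDS_Pi v k la mu s \<alpha>"
proof -
  let ?\<theta> = "PDS_theta la mu s \<alpha>"
  have p': "prime p" "\<not> p dvd s" "int p dvd int k - ?\<theta>"
    using p unfolding PDS_Pi_def by auto
  obtain a where a: "a \<in> {PDS_theta la mu s 1, PDS_theta la mu s 2}" "(\<Sum>d\<in>D. \<chi> d) = of_int a"
      "int p dvd int k - a"
    using PDS_char_sum_prime_exponent[OF fin reg s \<chi>(1,2) p'(1) \<chi>(3)] .
  have "int p dvd a - ?\<theta>"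
    using dvd_diff[OF p'(3) a(3)] by simp
  then have a\<theta>: "a = ?\<theta>"
    using PDS_theta_eq_if_congruent[OF s p'(2) a(1) PDS_theta_cases] by blast
  obtain b where b: "b \<in> {PDS_theta la mu s 1, PDS_theta la mu s 2}" "(\<Sum>d\<in>D. \<psi> d) = of_int b"
      "int q dvd int k - b"
    using PDS_char_sum_prime_exponent[OF fin reg s \<psi>(1,2) q(1) \<psi>(3)] .
  have "int q dvd int k - ?\<theta>"
  proof (cases "p = q")
    case True
    with p'(3) show ?thesis by simp
  next
    case False
    have "a = b"
      by (rule PDS_char_sums_eq_if_prime_exponents[OF fin reg s \<chi>(1,3) \<psi> p'(1) q(1) False p'(2) q(3)
            a(2,1) b(2,1)])
    with a\<theta> b(3) show ?thesis
      by simp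
  qed
  with q show ?thesis
    unfolding PDS_Pi_def by simp
qed

lemma prime_exponent_char_if_char_order_dvd_PDS_pi:
  assumes "finite (carrier G)" "0 < v"
    and "linear_char G \<chi>" "\<not> principal_char G \<chi>" "char_order G \<chi> dvd PDS_pi v k la mu s \<alpha>"
  obtains p \<chi>' where "p \<in> PDS_Pi v k la mu s \<alpha>"
    "linear_char G \<chi>'" "\<not> principal_char G \<chi>'" "\<And>x. x \<in> carrier G \<Longrightarrow> \<chi>' x ^ p = 1"
proof -
  have "char_order G \<chi> \<noteq> 1"
    using assms(4) principal_char_iff_char_order_eq_1[OF assms(1,3)] by simp
  then obtain p where p: "prime p" "p dvd char_order G \<chi>"
    using prime_factor_nat by blast
  have "p dvd PDS_pi v k la mu s \<alpha>"
    using p(2) assms(5) by (rule dvd_trans)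
  then have "p \<in> PDS_Pi v k la mu s \<alpha>"
    unfolding PDS_pi_def
    by (rule prime_in_set_if_dvd_prod_powers[OF finite_PDS_Pi[OF assms(2)] _ p(1), rotated])
       (simp add: PDS_Pi_def)
  then show thesis
    by (rule that[OF _ linear_char_power[OF assms(3)] linear_char_power_div_prime[OF assms(1,3) p]])
qed

lemma prime_factors_char_order_subset_PDS_Pi:
  assumes fin: "finite (carrier G)" and reg: "is_regular_PDS G D v k la mu"
    and s: "int s ^ 2 = PDS_Delta k la mu"
    and \<chi>: "linear_char G \<chi>" "\<not> principal_char G \<chi>" "\<And>x. x \<in> carrier G \<Longrightarrow> \<chi> x ^ p = 1"
    and p: "p \<in> PDS_Pi v k la mu s \<alpha>"
    and \<psi>: "linear_char G \<psi>" "coprime (char_order G \<psi>) s"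
  shows "prime_factors (char_order G \<psi>) \<subseteq> PDS_Pi v k la mu s \<alpha>"
proof
  fix q assume "q \<in> prime_factors (char_order G \<psi>)"
  then have q: "prime q" "q dvd char_order G \<psi>"
    by auto
  have "order G = v"
    using reg unfolding is_regular_PDS_def is_PDS_def order_def by simp
  then have "q dvd v"
    using dvd_trans[OF q(2) char_order_dvd_order[OF fin \<psi>(1)]] by simp
  moreover have "\<not> q dvd s"
    using q(1) coprime_common_divisor[OF \<psi>(2) q(2)] not_prime_unit by blast
  ultimately show "q \<in> PDS_Pi v k la mu s \<alpha>"
    using prime_exponent_char_in_PDS_Pi[OF fin reg s \<chi> p linear_char_power[OF \<psi>(1)]
        linear_char_power_div_prime[OF fin \<psi>(1) q] q(1)] by blast
qed

end

theorem mainTheorem8: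
  fixes G :: "('a, 'b) monoid_scheme" and D :: "'a set"
    and v k la mu s \<alpha> :: nat
  assumes "group G" and "finite (carrier G)"
    and "is_regular_PDS G D v k la mu"
    and "0 < mu" and "mu < k"
    and "int s ^ 2 = PDS_Delta k la mu"
    and "\<alpha> \<in> {1, 2}"
    and "\<exists>\<chi>. linear_char G \<chi> \<and> \<not> principal_char G \<chi> \<and>
              char_order G \<chi> dvd PDS_pi v k la mu s \<alpha>"
  shows "\<forall>\<psi>. linear_char G \<psi> \<and> coprime (char_order G \<psi>) s \<longrightarrow>
              char_order G \<psi> dvd PDS_pi v k la mu s \<alpha>"
proof -
  interpret group G by (rule assms(1))
  have "order G = v"
    using assms(3) unfolding is_regular_PDS_def is_PDS_def order_def by simp
  then have "0 < v"
    using assms(2) order_gt_0_iff_finite by simp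
  obtain \<chi> where "linear_char G \<chi>" "\<not> principal_char G \<chi>" "char_order G \<chi> dvd PDS_pi v k la mu s \<alpha>"
    using assms(8) by blast
  then obtain p \<chi>' where p: "p \<in> PDS_Pi v k la mu s \<alpha>"
    and \<chi>': "linear_char G \<chi>'" "\<not> principal_char G \<chi>'" "\<And>x. x \<in> carrier G \<Longrightarrow> \<chi>' x ^ p = 1"
    using prime_exponent_char_if_char_order_dvd_PDS_pi[OF assms(2) \<open>0 < v\<close>] by blast
  show ?thesis
  proof (intro allI impI, elim conjE)
    fix \<psi> assume \<psi>: "linear_char G \<psi>" "coprime (char_order G \<psi>) s"
    have "char_order G \<psi> dvd v"
      using char_order_dvd_order[OF assms(2) \<psi>(1)] \<open>order G = v\<close> by simp
    moreover have "prime_factors (char_order G \<psi>) \<subseteq> PDS_Pi v k la mu s \<alpha>"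
      by (rule prime_factors_char_order_subset_PDS_Pi[OF assms(2,3,6) \<chi>' p \<psi>])
    ultimately show "char_order G \<psi> dvd PDS_pi v k la mu s \<alpha>"
      unfolding PDS_pi_def using \<open>0 < v\<close> finite_PDS_Pi[OF \<open>0 < v\<close>]
      by (simp add: dvd_prod_multiplicity_if_prime_factors_subset)
  qed
qed

end
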